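(* Let $\ell\ge1$ and $V=\prod_{j=\ell,\dots,2,1}(c_1x^jy^jc_2)^2$. Suppose $C$ is an accepting computation of $V$ that does not completely match the first occurrence of the subword $v_\ell=c_1x^\ell y^\ell c_2$ of $V$ with the second occurrence of $v_\ell$ (i.e., at least one symbol of the second occurrence of $v_\ell$ is pushed onto the queue). Then at some point during $C$ the queue contains two full $x$-blocks or two full $y$-blocks.
   Context: Queue automaton: a configuration is written $Q\,\|\,x$ ($Q$ = queue contents, $x$ = remaining input); a step from $Q\,\|\,\sigma x$ ($\sigma$ a symbol) goes either to $Q\sigma\,\|\,x$ (push the input symbol) or, if $Q=\sigma Q'$, to $Q'\,\|\,x$ (the input symbol is matched against the leftmost queue symbol, which is popped; that queue symbol was pushed from an earlier input position and the two occurrences are said to be matched). An accepting computation of $w$ is a computation $\varepsilon\,\|\,w\vdash^*\varepsilon\,\|\,\varepsilon$ ($\varepsilon$ the empty string). Here $c_1,c_2,x,y$ are four distinct symbols and $V=v_\ell v_\ell v_{\ell-1}v_{\ell-1}\cdots v_1v_1$ with $v_j=c_1x^jy^jc_2$. Each displayed subword $x^j$ of $V$ is an $x$-block and each displayed $y^j$ a $y$-block. At a given point of a computation, the queue contains a full $x$-block (resp. $y$-block) if the entire block $x^j$ (resp. $y^j$) of $V$ has been pushed onto the queue, with none of its symbols matched when read, and none of its symbols has yet been popped. *)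

theory Defs
  imports Main
begin

datatype sym = C1 | C2 | X | Y

text \<open>A computation of the queue automaton on input w is determined by the
sequence of step choices ds (True = push the current input symbol,
False = match it against the leftmost queue symbol and pop that).
We track the queue as the list of input positions whose symbols it holds
(the queue contents as a word is  map (\<lambda>i. w ! i) (qstate w ds k) ).
qstate w ds k is the queue after the first k steps.\<close>
fun qstate :: "'a list \<Rightarrow> bool list \<Rightarrow> nat \<Rightarrow> nat list" where
  "qstate w ds 0 = []"
| "qstate w ds (Suc k) =
     (if ds ! k then qstate w ds k @ [k] else tl (qstate w ds k))"

definition accepting :: "'a list \<Rightarrow> bool list \<Rightarrow> bool" where
  "accepting w ds \<longleftrightarrow>
     length ds = length w
     \<and> (\<forall>k < length w. \<not> ds ! k \<longrightarrow>
          qstate w ds k \<noteq> [] \<and> w ! hd (qstate w ds k) = w ! k)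
     \<and> qstate w ds (length w) = []"

definition vblk :: "nat \<Rightarrow> sym list" where
  "vblk j = [C1] @ replicate j X @ replicate j Y @ [C2]"

definition factors :: "nat \<Rightarrow> sym list list" where
  "factors l = map (\<lambda>m. vblk (l - m div 2)) [0..<2*l]"

definition Vword :: "nat \<Rightarrow> sym list" where
  "Vword l = concat (factors l)"

definition fstart :: "nat \<Rightarrow> nat \<Rightarrow> nat" where
  "fstart l m = length (concat (take m (factors l)))"

definition xblock :: "nat \<Rightarrow> nat \<Rightarrow> nat set" where
  "xblock l m = {fstart l m + 1 ..< fstart l m + 1 + (l - m div 2)}"

definition yblock :: "nat \<Rightarrow> nat \<Rightarrow> nat set" where
  "yblock l m = {fstart l m + 1 + (l - m div 2) ..< fstart l m + 1 + 2 * (l - m div 2)}"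

end

theory Submission
  imports Defs
begin

text \<open>A pop needs the leftmost queue symbol to equal the input symbol. Hence a queue element
  whose symbol differs from all symbols read during a stretch of the computation survives it,
  and if it is at the front, everything read in the meantime is pushed.

  The first copy of \<open>v\<^sub>l\<close> is pushed completely. If the \<open>c\<^sub>1\<close> of the second copy is
  pushed, the first \<open>c\<^sub>1\<close> stays in front while the second \<open>x\<close>-block is pushed. If it is
  matched but some \<open>x\<close> of the second copy is pushed, an \<open>x\<close> of the first copy stays in front
  while the second \<open>y\<close>-block is pushed. Otherwise all these \<open>x\<close>'s are matched, so the
  second \<open>c\<^sub>2\<close> is pushed (this already contradicts acceptance when \<open>l = 1\<close>). The first
  \<open>c\<^sub>2\<close> cannot be matched by the \<open>y\<close>'s of the next factor \<open>v\<^sub>l\<^sub>-\<^sub>1\<close>, and its \<open>c\<^sub>2\<close> pops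
  at most one element, so a \<open>y\<close> or \<open>c\<^sub>2\<close> is in front while the \<open>x\<close>-blocks of both copies
  of \<open>v\<^sub>l\<^sub>-\<^sub>1\<close> are pushed.\<close>

definition pushes :: "bool list \<Rightarrow> nat \<Rightarrow> nat \<Rightarrow> nat list" where
  "pushes ds k k' = filter (\<lambda>i. ds ! i) [k..<k']"

definition pops :: "bool list \<Rightarrow> nat \<Rightarrow> nat \<Rightarrow> nat" where
  "pops ds k k' = length (filter (\<lambda>i. \<not> ds ! i) [k..<k'])"

lemma pops_add_length_pushes: "k \<le> k' \<Longrightarrow> pops ds k k' + length (pushes ds k k') = k' - k"
  unfolding pops_def pushes_def using sum_length_filter_compl[of "\<lambda>i. ds ! i" "[k..<k']"] by simp

lemma pushes_eq_Nil_iff: "pushes ds k k' = [] \<longleftrightarrow> (\<forall>i\<in>{k..<k'}. \<not> ds ! i)"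
  by (auto simp: pushes_def filter_empty_conv)

lemma pushes_if_no_pops: "pops ds k k' = 0 \<Longrightarrow> pushes ds k k' = [k..<k']"
  by (auto simp: pops_def pushes_def filter_empty_conv intro: filter_True)

lemma accepting_pop_matches:
  "accepting w ds \<Longrightarrow> k < length w \<Longrightarrow> \<not> ds ! k \<Longrightarrow>
     qstate w ds k \<noteq> [] \<and> w ! hd (qstate w ds k) = w ! k"
  by (simp add: accepting_def)

lemma qstate_keeps_unmatchable:
  assumes acc: "accepting w ds" and q: "qstate w ds k = R @ c # T"
    and le: "k \<le> k'" and len: "k' \<le> length w"
    and unmatchable: "\<forall>i\<in>{k..<k'}. w ! i \<noteq> w ! c"
  shows "qstate w ds k' = drop (pops ds k k') R @ c # T @ pushes ds k k' \<and> pops ds k k' \<le> length R"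
  using le len unmatchable
proof (induction k' rule: dec_induct)
  case base
  then show ?case using q by (simp add: pops_def pushes_def)
next
  case (step n)
  then have IH: "qstate w ds n = drop (pops ds k n) R @ c # T @ pushes ds k n"
    and pops_le: "pops ds k n \<le> length R" by auto
  show ?case
  proof (cases "ds ! n")
    case True
    then show ?thesis using IH pops_le step.hyps by (simp add: pops_def pushes_def)
  next
    case False
    have "w ! hd (qstate w ds n) = w ! n"
      using accepting_pop_matches[OF acc _ False] step.prems(1) step.hyps by simp
    then have "pops ds k n < length R"
      using IH step.prems(2) step.hyps pops_le by (cases "pops ds k n = length R") auto
    then show ?thesis using IH False step.hyps by (simp add: pops_def pushes_def drop_Suc tl_drop)
  qed
qed

lemma qstate_front_stays:
  assumes "accepting w ds" and "qstate w ds k = c # T" and "k \<le> k'" and "k' \<le> length w"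
    and "\<forall>i\<in>{k..<k'}. w ! i \<noteq> w ! c"
  shows "qstate w ds k' = c # T @ [k..<k']"
  using qstate_keeps_unmatchable[of w ds k "[]" c T k'] assms pushes_if_no_pops by simp

lemma qstate_one: "accepting w ds \<Longrightarrow> w \<noteq> [] \<Longrightarrow> qstate w ds 1 = [0]"
  using accepting_pop_matches[of w ds 0] by (cases "ds ! 0") auto

lemma nth_concat_take:
  assumes "m < length xss" "i < length (xss ! m)"
  shows "concat xss ! (length (concat (take m xss)) + i) = xss ! m ! i"
proof -
  have "concat xss = concat (take m xss) @ xss ! m @ concat (drop (Suc m) xss)"
    using id_take_nth_drop[OF assms(1)] by (metis concat.simps(2) concat_append)
  then show ?thesis using assms(2) by (simp add: nth_append)
qed

lemma length_factors [simp]: "length (factors l) = 2 * l"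
  by (simp add: factors_def)

lemma factors_nth [simp]: "m < 2 * l \<Longrightarrow> factors l ! m = vblk (l - m div 2)"
  by (simp add: factors_def)

lemma length_vblk [simp]: "length (vblk j) = 2 * j + 2"
  by (simp add: vblk_def)

lemma fstart_0 [simp]: "fstart l 0 = 0"
  by (simp add: fstart_def)

lemma fstart_Suc [simp]: "m < 2 * l \<Longrightarrow> fstart l (Suc m) = fstart l m + 2 * (l - m div 2) + 2"
  by (simp add: fstart_def take_Suc_conv_app_nth)

lemma length_Vword: "length (Vword l) = fstart l (2 * l)"
  by (simp add: Vword_def fstart_def)

lemma fstart_mono: "m \<le> m' \<Longrightarrow> fstart l m \<le> fstart l m'"
  unfolding fstart_def by (metis append_take_drop_id concat_append le_add1 length_append take_take min_absorb1)

lemma fstart_le_length_Vword: "m \<le> 2 * l \<Longrightarrow> fstart l m \<le> length (Vword l)"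
  using fstart_mono length_Vword by metis

lemma Vword_nth:
  "m < 2 * l \<Longrightarrow> i < 2 * (l - m div 2) + 2 \<Longrightarrow> Vword l ! (fstart l m + i) = vblk (l - m div 2) ! i"
  unfolding Vword_def fstart_def using nth_concat_take[of m "factors l" i] by simp

lemma vblk_nth:
  "i < 2 * j + 2 \<Longrightarrow> vblk j ! i = (if i = 0 then C1 else if i \<le> j then X else if i \<le> 2 * j then Y else C2)"
  by (auto simp: vblk_def nth_append nth_Cons')

lemma Vword_nth_in_factor:
  assumes "m < 2 * l" "fstart l m \<le> p" "p < fstart l (Suc m)"
  shows "Vword l ! p = (if p = fstart l m then C1 else if p \<le> fstart l m + (l - m div 2) then X
           else if p < fstart l (Suc m) - 1 then Y else C2)"
  using assms Vword_nth[of m l "p - fstart l m"] vblk_nth[of "p - fstart l m" "l - m div 2"]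
  by (auto simp: le_diff_conv2)

lemma qstate_push: "ds ! k \<Longrightarrow> k' = Suc k \<Longrightarrow> qstate w ds k' = qstate w ds k @ [k]"
  by simp

lemma qstate_pop: "\<not> ds ! k \<Longrightarrow> k' = Suc k \<Longrightarrow> qstate w ds k' = tl (qstate w ds k)"
  by simp

declare qstate.simps(2) [simp del]

definition two_full_blocks :: "nat \<Rightarrow> nat set \<Rightarrow> bool" where
  "two_full_blocks l S \<longleftrightarrow> (\<exists>m1 < 2 * l. \<exists>m2 < 2 * l. m1 \<noteq> m2 \<and>
     (xblock l m1 \<subseteq> S \<and> xblock l m2 \<subseteq> S \<or> yblock l m1 \<subseteq> S \<and> yblock l m2 \<subseteq> S))"

lemma two_full_xblocksI:
  "m1 < 2 * l \<Longrightarrow> m2 < 2 * l \<Longrightarrow> m1 \<noteq> m2 \<Longrightarrow> xblock l m1 \<subseteq> S \<Longrightarrow> xblock l m2 \<subseteq> S \<Longrightarrow> two_full_blocks l S"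
  unfolding two_full_blocks_def by blast

lemma two_full_yblocksI:
  "m1 < 2 * l \<Longrightarrow> m2 < 2 * l \<Longrightarrow> m1 \<noteq> m2 \<Longrightarrow> yblock l m1 \<subseteq> S \<Longrightarrow> yblock l m2 \<subseteq> S \<Longrightarrow> two_full_blocks l S"
  unfolding two_full_blocks_def by blast

locale V_accepting_run =
  fixes l :: nat and ds :: "bool list"
  assumes l_pos: "1 \<le> l" and accepting: "accepting (Vword l) ds"
begin

abbreviation w :: "sym list" where "w \<equiv> Vword l"

lemma fstart_1: "fstart l 1 = 2 * l + 2" and fstart_2: "fstart l 2 = 4 * l + 4"
  using l_pos fstart_Suc[of 0 l] fstart_Suc[of 1 l] by (simp_all add: numeral_2_eq_2)

lemma length_Vword_ge_two_factors: "4 * l + 4 \<le> length w"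
  using fstart_le_length_Vword[of 2 l] l_pos unfolding fstart_2 by simp

lemma xblock_0: "xblock l 0 = {1..<l + 1}" and xblock_1: "xblock l 1 = {2 * l + 3..<3 * l + 3}"
  and yblock_0: "yblock l 0 = {l + 1..<2 * l + 1}" and yblock_1: "yblock l 1 = {3 * l + 3..<4 * l + 3}"
  unfolding xblock_def yblock_def fstart_1 by (simp_all add: numeral_3_eq_3)

lemma nth_first_factor: "p < 2 * l + 2 \<Longrightarrow> w ! p = (if p = 0 then C1 else if p \<le> l then X else if p \<le> 2 * l then Y else C2)"
  using Vword_nth_in_factor[of 0 l p] l_pos by (auto simp: fstart_1)

lemma nth_second_factor: "2 * l + 2 \<le> p \<Longrightarrow> p < 4 * l + 4 \<Longrightarrow>
    w ! p = (if p = 2 * l + 2 then C1 else if p \<le> 3 * l + 2 then X else if p \<le> 4 * l + 2 then Y else C2)"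
  using Vword_nth_in_factor[of 1 l p] l_pos by (auto simp: fstart_1 fstart_2 numeral_2_eq_2)

lemma queue_after_first_factor: "qstate w ds (2 * l + 2) = 0 # [1..<2 * l + 2]"
  using accepting length_Vword_ge_two_factors nth_first_factor
  by (subst qstate_front_stays[where T = "[]"]) (auto intro: qstate_one split: if_splits)

lemma two_xblocks_if_second_C1_pushed:
  assumes "ds ! (2 * l + 2)"
  shows "two_full_blocks l (set (qstate w ds (3 * l + 3)))"
proof -
  have "qstate w ds (2 * l + 3) = qstate w ds (2 * l + 2) @ [2 * l + 2]"
    using assms by (rule qstate_push) simp
  then have "qstate w ds (2 * l + 3) = 0 # [1..<2 * l + 2] @ [2 * l + 2]"
    by (simp only: queue_after_first_factor append_Cons)
  then have "qstate w ds (3 * l + 3) = 0 # ([1..<2 * l + 2] @ [2 * l + 2]) @ [2 * l + 3..<3 * l + 3]"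
    using accepting length_Vword_ge_two_factors nth_first_factor nth_second_factor
    by (intro qstate_front_stays) auto
  then have "xblock l 0 \<subseteq> set (qstate w ds (3 * l + 3))" "xblock l 1 \<subseteq> set (qstate w ds (3 * l + 3))"
    unfolding xblock_0 xblock_1 by (auto simp del: upt_Suc)
  then show ?thesis
    using l_pos by (intro two_full_xblocksI[of 0 l 1]) auto
qed

lemma queue_after_second_xblock:
  assumes "\<not> ds ! (2 * l + 2)"
  shows "qstate w ds (3 * l + 3) =
    drop (pops ds (2 * l + 3) (3 * l + 3)) [1..<2 * l + 1] @ (2 * l + 1) # pushes ds (2 * l + 3) (3 * l + 3)"
proof -
  have "qstate w ds (2 * l + 3) = tl (qstate w ds (2 * l + 2))"
    using assms by (rule qstate_pop) simp
  also have "\<dots> = [1..<2 * l + 1] @ (2 * l + 1) # []"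
    unfolding queue_after_first_factor using upt_Suc_append[of 1 "2 * l + 1"] by (simp del: upt_Suc)
  finally show ?thesis
    using qstate_keeps_unmatchable[OF accepting, of "2 * l + 3" _ _ _ "3 * l + 3"] length_Vword_ge_two_factors
      nth_first_factor nth_second_factor by auto
qed

lemma two_yblocks_if_second_xblock_pushed:
  assumes "\<not> ds ! (2 * l + 2)" and "pops ds (2 * l + 3) (3 * l + 3) < l"
  shows "two_full_blocks l (set (qstate w ds (4 * l + 4)))"
proof -
  let ?a = "pops ds (2 * l + 3) (3 * l + 3)"
  have "drop ?a [1..<2 * l + 1] = (?a + 1) # [?a + 2..<2 * l + 1]"
    using assms(2) upt_conv_Cons[of "?a + 1" "2 * l + 1"] by (simp del: upt_Suc)
  then have "qstate w ds (3 * l + 3) = (?a + 1) # [?a + 2..<2 * l + 1] @ (2 * l + 1) # pushes ds (2 * l + 3) (3 * l + 3)"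
    using queue_after_second_xblock[OF assms(1)] by simp
  then have "qstate w ds (4 * l + 4) =
      (?a + 1) # ([?a + 2..<2 * l + 1] @ (2 * l + 1) # pushes ds (2 * l + 3) (3 * l + 3)) @ [3 * l + 3..<4 * l + 4]"
    using accepting length_Vword_ge_two_factors nth_first_factor nth_second_factor assms(2)
    by (intro qstate_front_stays) auto
  then have "yblock l 0 \<subseteq> set (qstate w ds (4 * l + 4))" "yblock l 1 \<subseteq> set (qstate w ds (4 * l + 4))"
    unfolding yblock_0 yblock_1 using assms(2) by (auto simp del: upt_Suc)
  then show ?thesis
    using l_pos by (intro two_full_yblocksI[of 0 l 1]) auto
qed

lemma queue_after_second_yblock:
  assumes C1_popped: "\<not> ds ! (2 * l + 2)" and xs_popped: "pops ds (2 * l + 3) (3 * l + 3) = l"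
  shows "qstate w ds (4 * l + 3) =
    drop (pops ds (3 * l + 3) (4 * l + 3)) [l + 1..<2 * l + 1] @ (2 * l + 1) # pushes ds (3 * l + 3) (4 * l + 3)"
proof -
  have "pushes ds (2 * l + 3) (3 * l + 3) = []"
    using pops_add_length_pushes[of "2 * l + 3" "3 * l + 3" ds] xs_popped by simp
  then have "qstate w ds (3 * l + 3) = [l + 1..<2 * l + 1] @ (2 * l + 1) # []"
    using queue_after_second_xblock[OF C1_popped] xs_popped by (simp add: add.commute)
  then show ?thesis
    using qstate_keeps_unmatchable[OF accepting, of "3 * l + 3" _ _ _ "4 * l + 3"] length_Vword_ge_two_factors
      nth_first_factor nth_second_factor by auto
qed

text \<open>Matching the second \<open>c\<^sub>2\<close> needs the first \<open>c\<^sub>2\<close> at the front of the queue, i.e. all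
  \<open>y\<close>'s of the second copy of \<open>v\<^sub>l\<close> matched as well; then that copy is matched completely.\<close>

lemma second_C2_pushed:
  assumes C1_popped: "\<not> ds ! (2 * l + 2)" and xs_popped: "pops ds (2 * l + 3) (3 * l + 3) = l"
    and pushed: "\<exists>i\<in>{2 * l + 2..<4 * l + 4}. ds ! i"
  shows "ds ! (4 * l + 3)"
proof (rule ccontr)
  let ?b = "pops ds (3 * l + 3) (4 * l + 3)"
  assume C2_popped: "\<not> ds ! (4 * l + 3)"
  then have front_C2: "w ! hd (qstate w ds (4 * l + 3)) = C2"
    using accepting_pop_matches[OF accepting, of "4 * l + 3"] length_Vword_ge_two_factors nth_second_factor by simp
  have "?b = l"
  proof (rule ccontr)
    assume "?b \<noteq> l"
    then have "?b < l"
      using pops_add_length_pushes[of "3 * l + 3" "4 * l + 3" ds] by simp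
    then have "hd (qstate w ds (4 * l + 3)) = l + 1 + ?b"
      using queue_after_second_yblock[OF C1_popped xs_popped] by (simp add: hd_append del: upt_Suc)
    then show False
      using front_C2 \<open>?b < l\<close> nth_first_factor by simp
  qed
  then have "pushes ds (3 * l + 3) (4 * l + 3) = []" "pushes ds (2 * l + 3) (3 * l + 3) = []"
    using pops_add_length_pushes[of "3 * l + 3" "4 * l + 3" ds]
      pops_add_length_pushes[of "2 * l + 3" "3 * l + 3" ds] xs_popped by simp_all
  moreover obtain i where "i \<in> {2 * l + 2..<4 * l + 4}" "ds ! i"
    using pushed by blast
  ultimately show False
    using C1_popped C2_popped unfolding pushes_eq_Nil_iff
    by (cases "i = 2 * l + 2 \<or> i = 4 * l + 3") auto
qed

lemma queue_after_second_factor: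
  assumes C1_popped: "\<not> ds ! (2 * l + 2)" and xs_popped: "pops ds (2 * l + 3) (3 * l + 3) = l"
    and pushed: "\<exists>i\<in>{2 * l + 2..<4 * l + 4}. ds ! i"
  shows "\<exists>R T. qstate w ds (4 * l + 4) = R @ (2 * l + 1) # T @ [4 * l + 3] \<and> (\<forall>r \<in> set R \<union> set T. w ! r = Y)"
proof -
  let ?R = "drop (pops ds (3 * l + 3) (4 * l + 3)) [l + 1..<2 * l + 1]"
  let ?T = "pushes ds (3 * l + 3) (4 * l + 3)"
  have "qstate w ds (4 * l + 4) = qstate w ds (4 * l + 3) @ [4 * l + 3]"
    using second_C2_pushed[OF assms] by (rule qstate_push) simp
  then have "qstate w ds (4 * l + 4) = ?R @ (2 * l + 1) # ?T @ [4 * l + 3]"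
    using queue_after_second_yblock[OF C1_popped xs_popped] by simp
  moreover have "set ?R \<union> set ?T \<subseteq> {l + 1..<2 * l + 1} \<union> {3 * l + 3..<4 * l + 3}"
    using set_drop_subset[of _ "[l + 1..<2 * l + 1]"] by (auto simp: pushes_def simp del: upt_Suc)
  moreover have "w ! r = Y" if "r \<in> {l + 1..<2 * l + 1} \<union> {3 * l + 3..<4 * l + 3}" for r
    using that nth_first_factor[of r] nth_second_factor[of r] by auto
  ultimately show ?thesis
    by blast
qed

context
  assumes two_le_l: "2 \<le> l"
begin

lemma fstart_3: "fstart l 3 = 6 * l + 4"
  using two_le_l fstart_Suc[of 2 l] fstart_2 by simp

lemma fstart_4: "fstart l 4 = 8 * l + 4"
  using two_le_l fstart_Suc[of 3 l] fstart_3 by simp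

lemma length_Vword_ge_four_factors: "8 * l + 4 \<le> length w"
  using fstart_le_length_Vword[of 4 l] two_le_l unfolding fstart_4 by simp

lemma xblock_2: "xblock l 2 = {4 * l + 5..<5 * l + 4}" and xblock_3: "xblock l 3 = {6 * l + 5..<7 * l + 4}"
  using two_le_l unfolding xblock_def fstart_2 fstart_3 by (simp_all add: add.commute)

lemma nth_third_factor: "4 * l + 4 \<le> p \<Longrightarrow> p < 6 * l + 4 \<Longrightarrow>
    w ! p = (if p = 4 * l + 4 then C1 else if p \<le> 5 * l + 3 then X else if p \<le> 6 * l + 2 then Y else C2)"
  using Vword_nth_in_factor[of 2 l p] two_le_l by (auto simp: fstart_2 fstart_3 numeral_3_eq_3)

lemma nth_fourth_factor: "6 * l + 4 \<le> p \<Longrightarrow> p < 8 * l + 4 \<Longrightarrow>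
    w ! p = (if p = 6 * l + 4 then C1 else if p \<le> 7 * l + 3 then X else if p \<le> 8 * l + 2 then Y else C2)"
  using Vword_nth_in_factor[of 3 l p] two_le_l by (auto simp: fstart_3 fstart_4 numeral_3_eq_3)

lemma queue_after_third_yblock:
  assumes Q: "qstate w ds (4 * l + 4) = R @ (2 * l + 1) # T @ [4 * l + 3]"
    and Ys: "\<forall>r \<in> set R \<union> set T. w ! r = Y"
  shows "\<exists>S G. qstate w ds (6 * l + 3) = S @ [4 * l + 4..<5 * l + 4] @ G \<and> tl S \<noteq> []
           \<and> (\<forall>s \<in> set S. w ! s \<in> {Y, C2})"
proof -
  let ?P = "R @ (2 * l + 1) # T @ [4 * l + 3]"
  have P_syms: "\<forall>r \<in> set ?P. w ! r \<in> {Y, C2}"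
    using Ys nth_first_factor[of "2 * l + 1"] nth_second_factor[of "4 * l + 3"] by auto
  obtain c P' where cP': "?P = c # P'"
    by (cases R) auto
  have "qstate w ds (5 * l + 4) = c # P' @ [4 * l + 4..<5 * l + 4]"
  proof (rule qstate_front_stays[OF accepting])
    have "w ! c \<in> {Y, C2}"
      using P_syms cP' by (metis list.set_intros(1))
    then show "\<forall>i\<in>{4 * l + 4..<5 * l + 4}. w ! i \<noteq> w ! c"
      using nth_third_factor by auto
  qed (use Q cP' length_Vword_ge_four_factors in auto)
  then have "qstate w ds (5 * l + 4) = R @ (2 * l + 1) # (T @ [4 * l + 3] @ [4 * l + 4..<5 * l + 4])"
    using cP' by (metis append.assoc append_Cons)
  then have "qstate w ds (6 * l + 3) = drop (pops ds (5 * l + 4) (6 * l + 3)) R @ (2 * l + 1) #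
      (T @ [4 * l + 3] @ [4 * l + 4..<5 * l + 4]) @ pushes ds (5 * l + 4) (6 * l + 3)"
    using qstate_keeps_unmatchable[OF accepting, of "5 * l + 4" _ _ _ "6 * l + 3"] length_Vword_ge_four_factors
      nth_first_factor[of "2 * l + 1"] nth_third_factor two_le_l by auto
  moreover define S where "S = drop (pops ds (5 * l + 4) (6 * l + 3)) R @ (2 * l + 1) # T @ [4 * l + 3]"
  moreover have "tl S \<noteq> []"
    unfolding S_def by (cases "drop (pops ds (5 * l + 4) (6 * l + 3)) R") simp_all
  moreover have "set S \<subseteq> set ?P"
    unfolding S_def using set_drop_subset by fastforce
  ultimately show ?thesis
    using P_syms by (intro exI[of _ S] exI[of _ "pushes ds (5 * l + 4) (6 * l + 3)"]) auto
qed

lemma queue_before_fourth_factor: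
  assumes "qstate w ds (4 * l + 4) = R @ (2 * l + 1) # T @ [4 * l + 3]"
    and "\<forall>r \<in> set R \<union> set T. w ! r = Y"
  shows "\<exists>c S G. qstate w ds (6 * l + 4) = c # S @ [4 * l + 4..<5 * l + 4] @ G \<and> w ! c \<in> {Y, C2}"
proof -
  obtain S G where Q: "qstate w ds (6 * l + 3) = S @ [4 * l + 4..<5 * l + 4] @ G"
    and "tl S \<noteq> []" and S_syms: "\<forall>s \<in> set S. w ! s \<in> {Y, C2}"
    using queue_after_third_yblock[OF assms] by blast
  then obtain a b S' where S: "S = a # b # S'"
    by (cases S; cases "tl S") auto
  show ?thesis
  proof (cases "ds ! (6 * l + 3)")
    case True
    have "qstate w ds (6 * l + 4) = qstate w ds (6 * l + 3) @ [6 * l + 3]"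
      using True by (rule qstate_push) simp
    also have "\<dots> = a # (b # S') @ [4 * l + 4..<5 * l + 4] @ G @ [6 * l + 3]"
      unfolding Q S by (simp only: append.assoc append_Cons)
    finally have "qstate w ds (6 * l + 4) = a # (b # S') @ [4 * l + 4..<5 * l + 4] @ G @ [6 * l + 3]" .
    moreover have "w ! a \<in> {Y, C2}"
      using S S_syms by simp
    ultimately show ?thesis
      by blast
  next
    case False
    have "qstate w ds (6 * l + 4) = tl (qstate w ds (6 * l + 3))"
      using False by (rule qstate_pop) simp
    also have "\<dots> = b # S' @ [4 * l + 4..<5 * l + 4] @ G"
      unfolding Q S by (simp only: append.assoc append_Cons list.sel(3))
    finally have "qstate w ds (6 * l + 4) = b # S' @ [4 * l + 4..<5 * l + 4] @ G" .
    moreover have "w ! b \<in> {Y, C2}"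
      using S S_syms by simp
    ultimately show ?thesis
      by blast
  qed
qed

lemma two_xblocks_in_third_and_fourth_factor:
  assumes "qstate w ds (4 * l + 4) = R @ (2 * l + 1) # T @ [4 * l + 3]"
    and "\<forall>r \<in> set R \<union> set T. w ! r = Y"
  shows "two_full_blocks l (set (qstate w ds (7 * l + 4)))"
proof -
  obtain c S G where Q: "qstate w ds (6 * l + 4) = c # S @ [4 * l + 4..<5 * l + 4] @ G"
    and c: "w ! c \<in> {Y, C2}"
    using queue_before_fourth_factor[OF assms] by blast
  have "qstate w ds (7 * l + 4) = c # (S @ [4 * l + 4..<5 * l + 4] @ G) @ [6 * l + 4..<7 * l + 4]"
    using accepting Q length_Vword_ge_four_factors nth_fourth_factor c by (intro qstate_front_stays) auto
  then have "xblock l 2 \<subseteq> set (qstate w ds (7 * l + 4))" "xblock l 3 \<subseteq> set (qstate w ds (7 * l + 4))"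
    unfolding xblock_2 xblock_3 by (auto simp del: upt_Suc)
  then show ?thesis
    using two_le_l by (intro two_full_xblocksI[of 2 l 3]) auto
qed

end

lemma length_Vword_one: "l = 1 \<Longrightarrow> length w = 4 * l + 4"
  using length_Vword[of l] fstart_2 by simp

lemma two_full_blocks_occur:
  assumes second_copy_pushed: "\<exists>i\<in>{2 * l + 2..<4 * l + 4}. ds ! i"
  shows "\<exists>k \<le> length w. two_full_blocks l (set (qstate w ds k))"
proof (cases "ds ! (2 * l + 2)")
  case True
  then show ?thesis
    using two_xblocks_if_second_C1_pushed length_Vword_ge_two_factors by (intro exI[of _ "3 * l + 3"]) auto
next
  case C1_popped: False
  show ?thesis
  proof (cases "pops ds (2 * l + 3) (3 * l + 3) < l")
    case True
    then show ?thesis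
      using two_yblocks_if_second_xblock_pushed[OF C1_popped] length_Vword_ge_two_factors by blast
  next
    case False
    then have "pops ds (2 * l + 3) (3 * l + 3) = l"
      using pops_add_length_pushes[of "2 * l + 3" "3 * l + 3" ds] by simp
    then obtain R T where Q: "qstate w ds (4 * l + 4) = R @ (2 * l + 1) # T @ [4 * l + 3]"
      and Ys: "\<forall>r \<in> set R \<union> set T. w ! r = Y"
      using queue_after_second_factor[OF C1_popped _ second_copy_pushed] by blast
    have "l \<noteq> 1"
      using Q length_Vword_one accepting by (auto simp: accepting_def)
    then have "7 * l + 4 \<le> length w" and "2 \<le> l"
      using length_Vword_ge_four_factors l_pos by auto
    then show ?thesis
      using two_xblocks_in_third_and_fourth_factor[OF _ Q Ys] by blast
  qed
qed

end

theorem lemma11: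
  fixes l :: nat and ds :: "bool list"
  assumes "l \<ge> 1"
    and "accepting (Vword l) ds"
    and "\<exists>i. length (vblk l) \<le> i \<and> i < 2 * length (vblk l) \<and> ds ! i"
  shows "\<exists>k \<le> length (Vword l). \<exists>m1 < 2 * l. \<exists>m2 < 2 * l. m1 \<noteq> m2 \<and>
           ((xblock l m1 \<subseteq> set (qstate (Vword l) ds k) \<and> xblock l m2 \<subseteq> set (qstate (Vword l) ds k))
          \<or> (yblock l m1 \<subseteq> set (qstate (Vword l) ds k) \<and> yblock l m2 \<subseteq> set (qstate (Vword l) ds k)))"
proof -
  interpret V_accepting_run l ds
    using assms(1,2) by unfold_locales
  have "\<exists>i\<in>{2 * l + 2..<4 * l + 4}. ds ! i"
    using assms(3) by auto
  then show ?thesis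
    using two_full_blocks_occur unfolding two_full_blocks_def by blast
qed

end
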